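(* Let $p$ be a prime number, let $X$ be a nonempty totally ordered set, and let $s$ be an integer with $1\leq s<p$. Then the images of the Lyndon words of length $s$ over $X$ generate the $\mathbb{Z}/p$-module $\mathrm{Sh}_{\mathbb{Z}}(X)_{\mathrm{indec},s}\otimes(\mathbb{Z}/p)$.
   Context: $X^*$ is the free monoid on $X$, whose elements are regarded as associative words in the alphabet $X$; $|w|$ denotes the length of a word $w$, and $X^s$ the set of words of length $s$. $X^*$ carries the alphabetical (lexicographic) order induced by the total order on $X$. A nonempty word $w$ is a Lyndon word if it is strictly smaller in this order than all its nontrivial proper right factors (suffixes). $\mathbb{Z}\langle X\rangle$ is the free $\mathbb{Z}$-module with basis $X^*$, graded by word length. The shuffle product of words $u=(x_1\cdots x_r)$ and $v=(x_{r+1}\cdots x_{r+t})$ is $u\,ш\,v=\sum_\sigma (x_{\sigma(1)}\cdots x_{\sigma(r+t)})$, summing over all permutations $\sigma$ of $1,\dots,r+t$ with $\sigma(1)<\cdots<\sigma(r)$ and $\sigma(r+1)<\cdots<\sigma(r+t)$; extended bilinearly it makes $\mathbb{Z}\langle X\rangle$ into the shuffle algebra $\mathrm{Sh}_{\mathbb{Z}}(X)$. Let $M$ be the $\mathbb{Z}$-submodule of $\mathbb{Z}\langle X\rangle$ generated by all $u\,ш\,v$ with $u,v\in X^*$ nonempty words. The indecomposable quotient is $\mathrm{Sh}_{\mathbb{Z}}(X)_{\mathrm{indec}}=\mathbb{Z}\langle X\rangle/M$, graded by word length; $\mathrm{Sh}_{\mathbb{Z}}(X)_{\mathrm{indec},s}$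 is its degree-$s$ component, and the "image" of a word $w\in X^s$ means the image of $w$ under $\mathbb{Z}\langle X\rangle_s\to \mathrm{Sh}_{\mathbb{Z}}(X)_{\mathrm{indec},s}\to \mathrm{Sh}_{\mathbb{Z}}(X)_{\mathrm{indec},s}\otimes(\mathbb{Z}/p)$. *)

theory Defs
  imports "HOL-Computational_Algebra.Primes"
begin

text \<open>Elements of the free Z-module Z<X> with basis the
words are represented as integer-valued functions on words (all elements considered below are
finitely supported, being integer combinations of basis words).\<close>

definition wordvec :: "'a list \<Rightarrow> ('a list \<Rightarrow> int)" where
  "wordvec w = (\<lambda>x. if x = w then 1 else 0)"

text \<open>shc u v w = number of shuffle permutations sigma of u and v producing w,
i.e. the coefficient of w in the shuffle product u sh v (standard recursion
(a u) sh (b v) = a (u sh b v) + b (a u sh v)).\<close>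

fun shc :: "'a list \<Rightarrow> 'a list \<Rightarrow> 'a list \<Rightarrow> nat" where
  "shc [] v w = (if v = w then 1 else 0)"
| "shc (a # u) [] w = (if a # u = w then 1 else 0)"
| "shc (a # u) (b # v) [] = 0"
| "shc (a # u) (b # v) (c # w) =
     (if a = c then shc u (b # v) w else 0) + (if b = c then shc (a # u) v w else 0)"

definition shuffle :: "'a list \<Rightarrow> 'a list \<Rightarrow> ('a list \<Rightarrow> int)" where
  "shuffle u v = (\<lambda>w. int (shc u v w))"

definition word_less :: "'a::linorder list \<Rightarrow> 'a list \<Rightarrow> bool" where
  "word_less u v \<longleftrightarrow> (u, v) \<in> lexord {(x, y). x < y}"

definition lyndon :: "'a::linorder list \<Rightarrow> bool" where
  "lyndon w \<longleftrightarrow> w \<noteq> [] \<and> (\<forall>k. 0 < k \<and> k < length w \<longrightarrow> word_less w (drop k w))"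

inductive_set zspan :: "('b \<Rightarrow> int) set \<Rightarrow> ('b \<Rightarrow> int) set" for S where
  zero: "(\<lambda>_. 0) \<in> zspan S"
| base: "f \<in> S \<Longrightarrow> f \<in> zspan S"
| add: "f \<in> zspan S \<Longrightarrow> g \<in> zspan S \<Longrightarrow> (\<lambda>x. f x + g x) \<in> zspan S"
| smult: "f \<in> zspan S \<Longrightarrow> (\<lambda>x. c * f x) \<in> zspan S"

definition shuffle_gens :: "('a list \<Rightarrow> int) set" where
  "shuffle_gens = {shuffle u v | u v. u \<noteq> [] \<and> v \<noteq> []}"

definition p_multiples :: "nat \<Rightarrow> ('a list \<Rightarrow> int) set" where
  "p_multiples p = {(\<lambda>x. int p * wordvec w x) | w. True}"

end

theory Submission
  imports Defs "HOL-Library.List_Lexorder"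
begin

(* If w is not a Lyndon word, write w = u v with v its lexicographically least nonempty suffix.
   Then v is a Lyndon word lying below every suffix of u, which makes u v the largest word
   occurring in the shuffle of u and v; hence u sh v = c w + (an integer combination of words
   with the letters of w that are smaller than w). Sorting the shuffles producing u v by whether
   their first letter comes from u or from v, at most one of the latter survives at each step,
   so 1 <= c <= |u| + 1 <= s < p. Thus c is a unit mod p, and induction along the lexicographic
   order reduces every word of length s to Lyndon words modulo the shuffles and p Z<X>. *)

section \<open>Lexicographic order on words\<close>

(* b < a, and neither word is a prefix of the other *)
fun diverges_above :: "'a::linorder list \<Rightarrow> 'a list \<Rightarrow> bool" where
  "diverges_above (x # xs) (y # ys) \<longleftrightarrow> y < x \<or> x = y \<and> diverges_above xs ys"
| "diverges_above _ _ \<longleftrightarrow> False"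

lemma diverges_above_less: "diverges_above a b \<Longrightarrow> b < a"
  by (induction a b rule: diverges_above.induct) auto

lemma diverges_above_append: "diverges_above a b \<Longrightarrow> diverges_above (a @ x) (b @ y)"
  by (induction a b rule: diverges_above.induct) auto

lemma append_less_append_if_diverges_above: "diverges_above a b \<Longrightarrow> b @ y < a @ x"
  using diverges_above_append diverges_above_less by blast

lemma diverges_above_append_left_iff [simp]:
  "diverges_above (P @ a) (P @ b) \<longleftrightarrow> diverges_above a b"
  by (induction P) auto

lemma diverges_above_asym: "diverges_above a b \<Longrightarrow> \<not> diverges_above b a"
  by (induction a b rule: diverges_above.induct) auto

lemma diverges_above_nonempty: "diverges_above a b \<Longrightarrow> a \<noteq> [] \<and> b \<noteq> []"
  by (cases a; cases b) auto

lemma le_imp_diverges_above_or_prefix: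
  "(b::'a::linorder list) \<le> a \<Longrightarrow> diverges_above a b \<or> (\<exists>z. a = b @ z)"
proof (induction a arbitrary: b)
  case (Cons x a)
  then show ?case by (cases b) (auto simp: less_le_not_le)
qed simp

lemma less_imp_diverges_above_or_prefix:
  "(a::'a::linorder list) < b \<Longrightarrow> diverges_above b a \<or> (\<exists>z. z \<noteq> [] \<and> b = a @ z)"
proof (induction a arbitrary: b)
  case Nil then show ?case by (cases b) auto
next
  case (Cons x a)
  then show ?case by (cases b) auto
qed

lemma append_le_append_left_iff [simp]: "P @ x \<le> P @ y \<longleftrightarrow> (x::'a::linorder list) \<le> y"
  by (induction P) auto

lemma append_le_swap_if_le_suffixes:
  assumes "\<forall>k < length z. B \<le> drop k z" and "B \<noteq> []"
  shows "B @ z \<le> z @ (B::'a::linorder list)"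
  using assms(1)
proof (induction "length z" arbitrary: z rule: less_induct)
  case less
  show ?case
  proof (cases "z = []")
    case False
    then have "B \<le> z" using less.prems by (metis drop0 length_greater_0_conv)
    then consider "diverges_above z B" | z' where "z = B @ z'"
      using le_imp_diverges_above_or_prefix by blast
    then show ?thesis
    proof cases
      case 1
      then show ?thesis using append_less_append_if_diverges_above less_imp_le by blast
    next
      case 2
      have "\<forall>k < length z'. B \<le> drop k z'"
      proof (intro allI impI)
        fix k assume "k < length z'"
        then show "B \<le> drop k z'"
          using less.prems[rule_format, of "length B + k"] 2 by simp
      qed
      moreover have "length z' < length z" using 2 assms(2) by simp
      ultimately have "B @ z' \<le> z' @ B" using less.hyps by blast
      then show ?thesis using 2 by simp
    qed
  qed simp
qed

section \<open>Lyndon words and the least suffix\<close>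

lemma word_less_iff_less: "word_less u v \<longleftrightarrow> u < v"
  unfolding word_less_def list_less_def by simp

lemma lyndon_iff:
  "lyndon w \<longleftrightarrow> w \<noteq> [] \<and> (\<forall>k. 0 < k \<and> k < length w \<longrightarrow> w < drop k w)"
  unfolding lyndon_def word_less_iff_less ..

lemma lyndon_suffix_diverges_above:
  assumes "lyndon w" "0 < k" "k < length w"
  shows "diverges_above (drop k w) w"
proof -
  have "w < drop k w" using assms by (simp add: lyndon_iff)
  then consider "diverges_above (drop k w) w" | z where "drop k w = w @ z"
    using less_imp_diverges_above_or_prefix by blast
  then show ?thesis
  proof cases
    case 2
    then have "length w \<le> length (drop k w)" by simp
    then show ?thesis using assms by simp
  qed
qed

lemma lyndon_if_le_suffixes:
  assumes "v \<noteq> []" and "\<forall>j < length v. v \<le> drop j v"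
  shows "lyndon v"
  unfolding lyndon_iff
proof (intro conjI allI impI)
  fix j assume j: "0 < j \<and> j < length v"
  then have "length (drop j v) < length v" by auto
  then have "v \<noteq> drop j v" by (metis less_irrefl)
  then show "v < drop j v" using assms(2) j by (simp add: order_le_neq_trans)
qed (fact assms(1))

lemma le_if_le_suffixes:
  fixes t v :: "'a::linorder list"
  assumes "t \<noteq> []" and tv: "v \<le> t @ v" and suffixes: "\<forall>j < length v. v \<le> drop j v"
  shows "v \<le> t"
proof (rule ccontr)
  assume "\<not> v \<le> t"
  then have "t < v" by simp
  then consider "diverges_above v t" | z where "z \<noteq> []" "v = t @ z"
    using less_imp_diverges_above_or_prefix by blast
  then show False
  proof cases
    case 1
    then show False using tv append_less_append_if_diverges_above[of v t v "[]"] by simp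
  next
    case 2
    have "v \<le> z" using suffixes[rule_format, of "length t"] 2 by simp
    moreover have "z \<le> v" using tv 2 by simp
    ultimately have "v = t @ v" using 2 by simp
    then show False using assms(1) by simp
  qed
qed

lemma min_suffix_split:
  fixes w :: "'a::linorder list"
  assumes "w \<noteq> []" and "\<not> lyndon w"
  obtains u v where "w = u @ v" "u \<noteq> []" "lyndon v" "\<forall>k < length u. v \<le> drop k u"
proof -
  define v where "v = Min ((\<lambda>k. drop k w) ` {..<length w})"
  have v_le: "v \<le> drop k w" if "k < length w" for k
    using that unfolding v_def by simp
  have "v \<in> (\<lambda>k. drop k w) ` {..<length w}"
    unfolding v_def using assms(1) by (intro Min_in) auto
  then obtain k0 where k0: "k0 < length w" "v = drop k0 w" by auto
  define u where "u = take k0 w"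
  have w: "w = u @ v" using k0 u_def by simp
  have v_le_suffixes: "\<forall>j < length v. v \<le> drop j v"
    using k0 v_le by (simp add: add.commute)
  then have lyndon_v: "lyndon v" using k0 by (intro lyndon_if_le_suffixes) auto
  have u_ne: "u \<noteq> []"
  proof
    assume "u = []"
    then show False using w lyndon_v assms(2) by simp
  qed
  have v_le_u: "\<forall>k < length u. v \<le> drop k u"
  proof (intro allI impI)
    fix k assume k: "k < length u"
    have "drop k u \<noteq> []" using k by simp
    moreover have "v \<le> drop k u @ v" using v_le[of k] k w by simp
    ultimately show "v \<le> drop k u" using le_if_le_suffixes v_le_suffixes by blast
  qed
  show thesis by (rule that[OF w u_ne lyndon_v v_le_u])
qed

section \<open>The largest word of a shuffle\<close>

lemma shc_Nil2 [simp]: "shc u [] w = (if u = w then 1 else 0)"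
  by (cases u) auto

lemma shc_commute: "shc u v w = shc v u w"
  by (induction u v w rule: shc.induct) (auto split: if_splits)

lemma mset_eq_if_shc_nonzero: "shc u v w \<noteq> 0 \<Longrightarrow> mset w = mset u + mset v"
  by (induction u v w rule: shc.induct) (auto split: if_splits)

lemma shc_append_pos: "0 < shc u v (u @ v)"
proof (induction u)
  case (Cons a u)
  then show ?case by (cases v) auto
qed simp

fun max_shuffle :: "'a::linorder list \<Rightarrow> 'a list \<Rightarrow> 'a list" where
  "max_shuffle [] v = v"
| "max_shuffle (a # u) [] = a # u"
| "max_shuffle (a # u) (b # v) = max (a # max_shuffle u (b # v)) (b # max_shuffle (a # u) v)"

lemma max_shuffle_Nil2 [simp]: "max_shuffle u [] = u"
  by (cases u) auto

lemma le_max_shuffle_if_shc_nonzero: "shc u v w \<noteq> 0 \<Longrightarrow> w \<le> max_shuffle u v"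
proof (induction u v w rule: shc.induct)
  case (4 a u b v c w)
  then show ?case by (auto split: if_splits simp: le_max_iff_disj)
qed (auto split: if_splits)

lemma shc_eq_0_if_max_shuffle_less: "max_shuffle u v < w \<Longrightarrow> shc u v w = 0"
  using le_max_shuffle_if_shc_nonzero leD by blast

lemma Cons_max_shuffle_le_left: "c # max_shuffle u v \<le> max_shuffle (c # u) v"
  by (cases v) auto

lemma Cons_max_shuffle_le_right: "c # max_shuffle u v \<le> max_shuffle u (c # v)"
  by (cases u) auto

lemma max_shuffle_append_left_le:
  fixes a b :: "'a::linorder list"
  assumes "b \<le> a"
  shows "max_shuffle (P @ a) b \<le> max_shuffle a (P @ b)"
  using assms
proof (induction a arbitrary: P b)
  case (Cons x a')
  note outer_IH = Cons.IH
  show ?case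
  proof (induction P)
    case (Cons q P)
    show ?case
    proof (cases b)
      case Nil
      have "shc (x # a') (q # P) (q # P @ x # a') \<noteq> 0"
        using shc_append_pos[of "q # P"] shc_commute by (metis less_numeral_extra(3) append_Cons)
      then show ?thesis using Nil le_max_shuffle_if_shc_nonzero by fastforce
    next
      case b: (Cons y b')
      have "q # max_shuffle (P @ x # a') b \<le> q # max_shuffle (x # a') (P @ b)"
        using Cons.IH by simp
      also have "\<dots> \<le> max_shuffle (x # a') ((q # P) @ b)"
        using Cons_max_shuffle_le_right by simp
      finally have left: "q # max_shuffle (P @ x # a') b \<le> max_shuffle (x # a') ((q # P) @ b)" .
      have "y # max_shuffle ((q # P) @ x # a') b' \<le> x # max_shuffle a' ((q # P) @ b)"
      proof (cases "y < x")
        case False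
        then have "y = x" "b' \<le> a'" using \<open>b \<le> x # a'\<close> b by auto
        then show ?thesis using outer_IH[where P = "q # P @ [x]" and b = b'] b by simp
      qed simp
      also have "\<dots> \<le> max_shuffle (x # a') ((q # P) @ b)"
        by (rule Cons_max_shuffle_le_left)
      finally show ?thesis using left b by simp
    qed
  qed simp
qed simp

lemma max_shuffle_Cons_if_ge:
  assumes "b \<le> x # a"
  shows "max_shuffle (x # a) b = x # max_shuffle a b"
proof (cases b)
  case b: (Cons y b')
  have "y # max_shuffle (x # a) b' \<le> x # max_shuffle a b"
  proof (cases "y < x")
    case False
    then have "y = x" "b' \<le> a" using assms b by auto
    then show ?thesis using max_shuffle_append_left_le[of b' a "[x]"] b by simp
  qed simp
  then show ?thesis using b by (simp add: max.absorb1)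
qed simp

lemma max_shuffle_eq_append:
  "\<forall>k < length u. v \<le> drop k u \<Longrightarrow> max_shuffle u v = u @ v"
proof (induction u)
  case (Cons x u)
  have "v \<le> x # u" using Cons.prems by (metis drop0 length_Cons zero_less_Suc)
  moreover have "\<forall>k < length u. v \<le> drop k u"
    using Cons.prems by (metis Suc_less_eq drop_Suc_Cons length_Cons)
  ultimately show ?case using Cons.IH by (simp add: max_shuffle_Cons_if_ge)
qed simp

(* Invariant of the induction in max_shuffle_less_rotate, covering both its uses: every suffix of A
   diverges above W, or W is a Lyndon word below all proper suffixes of A. *)
definition suffixes_dominate :: "'a::linorder list \<Rightarrow> 'a list \<Rightarrow> bool" where
  "suffixes_dominate A W \<longleftrightarrow> diverges_above A W \<and>
     (\<forall>k. 0 < k \<and> k < length A \<longrightarrow>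
        diverges_above (drop k A) W \<or> lyndon W \<and> W \<le> drop k A)"

lemma suffixes_dominate_suffix:
  assumes dom: "suffixes_dominate (P @ a) (P @ b)" and "P \<noteq> []" "a \<noteq> []"
  shows "suffixes_dominate a (P @ b)"
  unfolding suffixes_dominate_def
proof (intro conjI allI impI)
  fix k assume "0 < k \<and> k < length a"
  then show "diverges_above (drop k a) (P @ b) \<or> lyndon (P @ b) \<and> P @ b \<le> drop k a"
    using dom[unfolded suffixes_dominate_def] by (auto dest!: spec[of _ "length P + k"])
next
  have ab: "diverges_above a b" using dom by (simp add: suffixes_dominate_def)
  have "diverges_above a (P @ b) \<or> lyndon (P @ b) \<and> P @ b \<le> a"
    using dom assms(2,3) unfolding suffixes_dominate_def by (auto dest!: spec[of _ "length P"])
  moreover have False if "lyndon (P @ b)" and "a = P @ b @ z" for z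
  proof -
    have "b \<noteq> []" using ab diverges_above_nonempty by blast
    then have "diverges_above b (P @ b)"
      using lyndon_suffix_diverges_above[OF that(1), of "length P"] assms(2) by simp
    then have "diverges_above b a" using that(2) diverges_above_append[of b "P @ b" "[]" z] by simp
    then show False using ab diverges_above_asym by blast
  qed
  ultimately show "diverges_above a (P @ b)" using le_imp_diverges_above_or_prefix by fastforce
qed

lemma not_diverges_above_append_self: "\<not> diverges_above P (P @ b)"
  using diverges_above_append_left_iff[of P "[]" b] by simp

lemma max_shuffle_less_rotate:
  assumes "P \<noteq> []" and "suffixes_dominate (P @ a) (P @ b)"
  shows "max_shuffle (P @ a) b < a @ P @ b"
  using assms
proof (induction a arbitrary: P b)
  case Nil
  then show ?case by (simp add: suffixes_dominate_def not_diverges_above_append_self)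
next
  case (Cons x a')
  have dom_a: "suffixes_dominate (x # a') (P @ b)"
    using suffixes_dominate_suffix Cons.prems by blast
  have ab: "diverges_above (x # a') b" using Cons.prems(2) by (simp add: suffixes_dominate_def)
  then obtain y b' where b: "b = y # b'" by (cases b) auto
  obtain q P' where P: "P = q # P'" using Cons.prems(1) by (cases P) auto
  have right: "y # max_shuffle (P @ x # a') b' < x # a' @ P @ b"
  proof (cases "y < x")
    case False
    then have "y = x" using ab b by auto
    then have "max_shuffle ((P @ [x]) @ a') b' < a' @ (P @ [x]) @ b'"
      using Cons.IH[of "P @ [x]" b'] Cons.prems b by simp
    then show ?thesis using b \<open>y = x\<close> by simp
  qed simp
  have left: "q # max_shuffle (P' @ x # a') b < x # a' @ P @ b"
  proof (cases "q < x")
    case False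
    then have "q = x" using dom_a P by (auto simp: suffixes_dominate_def)
    have "max_shuffle (P' @ x # a') b \<le> max_shuffle (x # a') (P' @ b)"
      using max_shuffle_append_left_le diverges_above_less[OF ab] less_imp_le by blast
    also have "\<dots> < a' @ [x] @ P' @ b"
      using Cons.IH[of "[x]" "P' @ b"] dom_a P \<open>q = x\<close> by simp
    finally show ?thesis using P \<open>q = x\<close> by simp
  qed simp
  show ?case using left right P b by simp
qed

lemma shc_append_eq_1:
  "\<forall>k < length u. diverges_above (drop k u) v \<Longrightarrow> shc u v (u @ v) = 1"
proof (induction u)
  case (Cons x u')
  then have "diverges_above (x # u') v" by (metis drop0 length_Cons zero_less_Suc)
  then obtain y v' where v: "v = y # v'" by (cases v) auto
  have "shc u' v (u' @ v) = 1"
    using Cons by (metis Suc_less_eq drop_Suc_Cons length_Cons)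
  moreover have "shc (x # u') v' (u' @ v) = 0" if "y = x"
  proof -
    have "suffixes_dominate ([x] @ u') ([x] @ v')"
      using Cons.prems v that unfolding suffixes_dominate_def
      by (metis append_Cons append_Nil drop0 length_greater_0_conv list.discI)
    then have "max_shuffle ([x] @ u') v' < u' @ [x] @ v'"
      by (intro max_shuffle_less_rotate) simp
    then show ?thesis using v that shc_eq_0_if_max_shuffle_less by simp
  qed
  ultimately show ?case using v by auto
qed simp

section \<open>Multiplicity of u v in the shuffle of u and v\<close>

(* With v = x # v', every word in the shuffle of v' and v z is at most v' v z <= v' z v, and
   v' v z occurs in it exactly once. *)
lemma shc_tail_le_1_if_prefix:
  assumes lyn: "lyndon (x # v')" and z: "\<forall>k < length z. x # v' \<le> drop k z"
  shows "shc (x # v' @ z) v' (v' @ z @ x # v') \<le> 1"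
proof (cases "v' = []")
  case False
  let ?v = "x # v'"
  have above: "\<forall>k < length v'. diverges_above (drop k v') (?v @ z)"
  proof (intro allI impI)
    fix k assume "k < length v'"
    then have "diverges_above (drop (Suc k) ?v) ?v"
      using lyndon_suffix_diverges_above[OF lyn, of "Suc k"] by simp
    then show "diverges_above (drop k v') (?v @ z)"
      using diverges_above_append[of _ ?v "[]" z] by simp
  qed
  then have one: "shc v' (x # v' @ z) (v' @ x # v' @ z) = 1"
    using shc_append_eq_1 by fastforce
  have "max_shuffle v' (x # v' @ z) = v' @ x # v' @ z"
    using above diverges_above_less less_imp_le by (intro max_shuffle_eq_append) fastforce
  moreover have "v' @ x # v' @ z \<le> v' @ z @ x # v'"
    using append_le_swap_if_le_suffixes[OF z] by simp
  ultimately consider "v' @ x # v' @ z = v' @ z @ x # v'"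
    | "max_shuffle v' (x # v' @ z) < v' @ z @ x # v'"
    by (metis le_neq_trans)
  then show ?thesis
  proof cases
    case 1
    then show ?thesis using one shc_commute by (metis order_refl)
  next
    case 2
    then show ?thesis using shc_eq_0_if_max_shuffle_less shc_commute by (metis zero_le)
  qed
qed simp

lemma shc_Cons_tail_le_1:
  assumes lyn: "lyndon (x # v')" and le: "\<forall>k < length (x # u'). x # v' \<le> drop k (x # u')"
  shows "shc (x # u') v' (u' @ x # v') \<le> 1"
proof -
  have "x # v' \<le> x # u'" using le by (metis drop0 length_Cons zero_less_Suc)
  then consider "diverges_above (x # u') (x # v')" | z where "u' = v' @ z"
    using le_imp_diverges_above_or_prefix by fastforce
  then show ?thesis
  proof cases
    case 1
    then have "suffixes_dominate ([x] @ u') ([x] @ v')"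
      using le lyn unfolding suffixes_dominate_def by auto
    then have "max_shuffle ([x] @ u') v' < u' @ [x] @ v'"
      by (intro max_shuffle_less_rotate) simp
    then show ?thesis by (simp add: shc_eq_0_if_max_shuffle_less)
  next
    case 2
    have "\<forall>k < length z. x # v' \<le> drop k z"
    proof (intro allI impI)
      fix k assume "k < length z"
      then show "x # v' \<le> drop k z"
        using le[rule_format, of "Suc (length v') + k"] 2 by simp
    qed
    then show ?thesis using shc_tail_le_1_if_prefix[OF lyn] 2 by simp
  qed
qed

lemma shc_append_le:
  assumes lyn: "lyndon v" and "\<forall>k < length u. v \<le> drop k u"
  shows "shc u v (u @ v) \<le> length u + 1"
  using assms(2)
proof (induction u)
  case (Cons x u')
  obtain y v' where v: "v = y # v'" using lyn by (cases v) (auto simp: lyndon_iff)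
  have "shc u' v (u' @ v) \<le> length u' + 1"
    using Cons by (metis Suc_less_eq drop_Suc_Cons length_Cons)
  moreover have "shc (x # u') v' (u' @ v) \<le> 1" if "y = x"
    using shc_Cons_tail_le_1 lyn Cons.prems v that by blast
  ultimately show ?case using v by (cases "y = x") auto
qed simp

section \<open>Leading term of a shuffle and integer spans\<close>

definition lower_words :: "'a::linorder list \<Rightarrow> 'a list set" where
  "lower_words w = {x. set x \<subseteq> set w \<and> length x = length w \<and> x < w}"

lemma finite_lower_words: "finite (lower_words w)"
  unfolding lower_words_def
  by (rule finite_subset[OF _ finite_lists_length_eq[OF finite_set[of w], of "length w"]]) auto

lemma lower_words_psubset: "x \<in> lower_words w \<Longrightarrow> lower_words x \<subset> lower_words w"
  unfolding lower_words_def by auto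

lemma sum_wordvec:
  "finite A \<Longrightarrow> (\<Sum>x\<in>A. c x * wordvec x y) = (if y \<in> A then c y else 0)"
  unfolding wordvec_def by (simp add: sum.delta' if_distrib[of "\<lambda>t. c _ * t"] cong: if_cong)

lemma in_lower_words_if_shc_nonzero:
  assumes "max_shuffle u v = u @ v" and "shc u v y \<noteq> 0" and "y \<noteq> u @ v"
  shows "y \<in> lower_words (u @ v)"
proof -
  have "mset y = mset (u @ v)" using mset_eq_if_shc_nonzero[OF assms(2)] by simp
  then have "set y = set (u @ v)" "length y = length (u @ v)"
    by (metis set_mset_mset, metis size_mset)
  moreover have "y < u @ v"
    using le_max_shuffle_if_shc_nonzero[OF assms(2)] assms(1,3) by simp
  ultimately show ?thesis unfolding lower_words_def by simp
qed

lemma shuffle_eq_leading_term: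
  assumes "max_shuffle u v = u @ v"
  shows "shuffle u v = (\<lambda>y. int (shc u v (u @ v)) * wordvec (u @ v) y +
           (\<Sum>x\<in>lower_words (u @ v). int (shc u v x) * wordvec x y))"
proof
  fix y
  have "u @ v \<notin> lower_words (u @ v)" unfolding lower_words_def by simp
  moreover have "(\<Sum>x\<in>lower_words (u @ v). int (shc u v x) * wordvec x y) =
      (if y \<in> lower_words (u @ v) then int (shc u v y) else 0)"
    by (rule sum_wordvec[OF finite_lower_words])
  ultimately show "shuffle u v y = int (shc u v (u @ v)) * wordvec (u @ v) y +
      (\<Sum>x\<in>lower_words (u @ v). int (shc u v x) * wordvec x y)"
    using in_lower_words_if_shc_nonzero[OF assms, of y]
    by (auto simp: shuffle_def wordvec_def)
qed

lemma shuffle_leading_term_if_not_lyndon: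
  fixes w :: "'a::linorder list"
  assumes "w \<noteq> []" and "\<not> lyndon w"
  obtains u v c d where "u \<noteq> []" "v \<noteq> []" "0 < c" "c \<le> length w"
    "shuffle u v = (\<lambda>y. int c * wordvec w y + (\<Sum>x\<in>lower_words w. d x * wordvec x y))"
proof -
  obtain u v where w: "w = u @ v" and "u \<noteq> []" "lyndon v"
    and v_le: "\<forall>k < length u. v \<le> drop k u"
    using min_suffix_split[OF assms] by blast
  have "v \<noteq> []" using \<open>lyndon v\<close> by (simp add: lyndon_iff)
  have pos: "0 < shc u v w" using w shc_append_pos by simp
  have bound: "shc u v w \<le> length w"
    using shc_append_le[OF \<open>lyndon v\<close> v_le] w \<open>v \<noteq> []\<close> by (cases v) auto
  have leading: "shuffle u v = (\<lambda>y. int (shc u v w) * wordvec w y +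
      (\<Sum>x\<in>lower_words w. int (shc u v x) * wordvec x y))"
    using shuffle_eq_leading_term max_shuffle_eq_append[OF v_le] w by simp
  show thesis by (rule that[OF \<open>u \<noteq> []\<close> \<open>v \<noteq> []\<close> pos bound leading])
qed

lemma zspan_diff: "f \<in> zspan S \<Longrightarrow> g \<in> zspan S \<Longrightarrow> (\<lambda>x. f x - g x) \<in> zspan S"
  using zspan.add[of f S "\<lambda>x. - 1 * g x"] zspan.smult[of g S "- 1"] by simp

lemma zspan_sum:
  assumes "finite A" and "\<forall>x\<in>A. g x \<in> zspan S"
  shows "(\<lambda>y. \<Sum>x\<in>A. c x * g x y) \<in> zspan S"
  using assms
proof (induction A rule: finite_induct)
  case empty
  then show ?case using zspan.zero by simp
next
  case (insert a A)
  then show ?case using zspan.add[OF zspan.smult[of "g a" S "c a"]] by simp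
qed

lemma zspan_if_coprime_multiples:
  assumes "(\<lambda>x. int a * f x) \<in> zspan S" and "(\<lambda>x. int b * f x) \<in> zspan S" and "coprime a b"
  shows "f \<in> zspan S"
proof -
  obtain s t where st: "s * int a + t * int b = 1"
    using bezout_int[of "int a" "int b"] assms(3) by (auto simp: coprime_iff_gcd_eq_1 gcd_int_int_eq)
  have "s * (int a * f x) + t * (int b * f x) = (s * int a + t * int b) * f x" for x
    by (simp add: algebra_simps)
  then have "f = (\<lambda>x. s * (int a * f x) + t * (int b * f x))"
    using st by auto
  also have "\<dots> \<in> zspan S"
    using zspan.add[OF zspan.smult[OF assms(1), where c = s] zspan.smult[OF assms(2), where c = t]]
    by simp
  finally show ?thesis .
qed

theorem proposition6p2:
  fixes p :: nat and s :: nat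
  assumes "prime p" and "1 \<le> s" and "s < p"
  shows "\<forall>w :: 'a::linorder list. length w = s \<longrightarrow>
           wordvec w \<in> zspan ({wordvec l | l. lyndon l \<and> length l = s}
                              \<union> shuffle_gens \<union> p_multiples p)"
proof (intro allI impI)
  define S :: "('a list \<Rightarrow> int) set"
    where "S = {wordvec l | l. lyndon l \<and> length l = s} \<union> shuffle_gens \<union> p_multiples p"
  fix w :: "'a list"
  assume "length w = s"
  then show "wordvec w \<in> zspan S"
  proof (induction w rule: measure_induct_rule[where f = "\<lambda>w. card (lower_words w)"])
    case (less w)
    show ?case
    proof (cases "lyndon w")
      case True
      then show ?thesis using less.prems unfolding S_def by (blast intro: zspan.base)
    next
      case False
      have "w \<noteq> []" using less.prems assms(2) by auto
      obtain u v c d where "u \<noteq> []" "v \<noteq> []" "0 < c" "c \<le> length w" and leading: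
          "shuffle u v = (\<lambda>y. int c * wordvec w y + (\<Sum>x\<in>lower_words w. d x * wordvec x y))"
        by (rule shuffle_leading_term_if_not_lyndon[OF \<open>w \<noteq> []\<close> False])
      have "shuffle u v \<in> zspan S"
        unfolding S_def shuffle_gens_def using \<open>u \<noteq> []\<close> \<open>v \<noteq> []\<close>
        by (blast intro: zspan.base)
      moreover have "wordvec x \<in> zspan S" if "x \<in> lower_words w" for x
      proof -
        have "card (lower_words x) < card (lower_words w)"
          by (rule psubset_card_mono[OF finite_lower_words lower_words_psubset[OF that]])
        moreover have "length x = s" using that less.prems by (simp add: lower_words_def)
        ultimately show ?thesis using less.IH by blast
      qed
      then have "(\<lambda>y. \<Sum>x\<in>lower_words w. d x * wordvec x y) \<in> zspan S"
        using finite_lower_words by (intro zspan_sum) auto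
      ultimately have "(\<lambda>y. int c * wordvec w y) \<in> zspan S"
        using zspan_diff by (fastforce simp: leading)
      moreover have "(\<lambda>y. int p * wordvec w y) \<in> zspan S"
        unfolding S_def p_multiples_def by (blast intro: zspan.base)
      moreover have "coprime c p"
      proof -
        have "\<not> p dvd c" using \<open>0 < c\<close> \<open>c \<le> length w\<close> less.prems assms(3)
          by (auto dest: dvd_imp_le)
        then show ?thesis using prime_imp_coprime[OF assms(1)] coprime_commute by blast
      qed
      ultimately show ?thesis by (rule zspan_if_coprime_multiples)
    qed
  qed
qed

end
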